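(* Let $q$ be a power of a prime $p$, let $k$ be an algebraically closed field of characteristic $p$, $G=\mathrm{GL}_n(k)$, $\mathfrak{g}=\mathfrak{gl}_n(k)$. Let $F:G\to G$ be $F((g_{i,j}))=\big((g^q_{n+1-j,\,n+1-i})\big)^{-1}$ and $F:\mathfrak{g}\to\mathfrak{g}$ be $F((x_{i,j}))=(x^q_{n+1-j,\,n+1-i})$. Fix $\alpha\in\mathbb{F}_{q^2}\setminus\mathbb{F}_q$ and define $s^{-1}:\mathfrak{g}_{\mathrm{nil}}\to G_{\mathrm{uni}}$ by $s^{-1}(x)=(1+\alpha^q x)^{-1}(\alpha x+1)$. If $x\in\mathfrak{g}_{\mathrm{nil}}$ satisfies $F(x)=x$, then $s^{-1}(x)\in G^F=\{g\in G: F(g)=g\}$.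
   Context: $G_{\mathrm{uni}}$ is the set of unipotent elements of $G$ and $\mathfrak{g}_{\mathrm{nil}}$ the set of nilpotent elements of $\mathfrak{g}$; $G^F$ is the finite unitary group $\mathrm{GU}_n(\mathbb{F}_q)$ defined by this $F$. *)

theory Defs
  imports "Jordan_Normal_Form.Matrix" "HOL-Computational_Algebra.Polynomial"
begin

definition alg_closed_type :: "'k::field itself \<Rightarrow> bool" where
  "alg_closed_type _ \<longleftrightarrow> (\<forall>f :: 'k poly. degree f > 0 \<longrightarrow> (\<exists>z. poly f z = 0))"

text \<open>Matrices are n x n JNF matrices, indices 0..n-1; so index n+1-i (1-based) becomes n-1-i.\<close>

definition GL :: "nat \<Rightarrow> 'k::field mat set" where
  "GL n = {g \<in> carrier_mat n n. invertible_mat g}"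

definition minv :: "nat \<Rightarrow> 'k::field mat \<Rightarrow> 'k mat" where
  "minv n A = (THE B. B \<in> carrier_mat n n \<and> A * B = 1\<^sub>m n \<and> B * A = 1\<^sub>m n)"

definition nilp :: "nat \<Rightarrow> 'k::field mat set" where
  "nilp n = {x \<in> carrier_mat n n. \<exists>m. x ^\<^sub>m m = 0\<^sub>m n n}"

definition unip :: "nat \<Rightarrow> 'k::field mat set" where
  "unip n = {g \<in> GL n. g - 1\<^sub>m n \<in> nilp n}"

definition F_lie :: "nat \<Rightarrow> nat \<Rightarrow> 'k::field mat \<Rightarrow> 'k mat" where
  "F_lie q n x = mat n n (\<lambda>(i,j). (x $$ (n - 1 - j, n - 1 - i)) ^ q)"

definition F_grp :: "nat \<Rightarrow> nat \<Rightarrow> 'k::field mat \<Rightarrow> 'k mat" where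
  "F_grp q n g = minv n (mat n n (\<lambda>(i,j). (g $$ (n - 1 - j, n - 1 - i)) ^ q))"

definition GF :: "nat \<Rightarrow> nat \<Rightarrow> 'k::field mat set" where
  "GF q n = {g \<in> GL n. F_grp q n g = g}"

definition s_inv :: "nat \<Rightarrow> nat \<Rightarrow> 'k::field \<Rightarrow> 'k mat \<Rightarrow> 'k mat" where
  "s_inv q n \<alpha> x = minv n (1\<^sub>m n + (\<alpha> ^ q) \<cdot>\<^sub>m x) * (\<alpha> \<cdot>\<^sub>m x + 1\<^sub>m n)"

end

theory Submission
  imports Defs "Jordan_Normal_Form.Determinant"
begin

text \<open>The map \<open>F_lie\<close> is additive, \<open>q\<close>-semilinear and reverses products (the
  anti-transpose composed with the Frobenius). Since \<open>F x = x\<close> and \<open>\<alpha>^(q^2) = \<alpha>\<close>, it swaps the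
  commuting matrices \<open>A = 1 + \<alpha>^q x\<close> and \<open>B = 1 + \<alpha> x\<close>; \<open>A\<close> is invertible because \<open>x\<close> is
  nilpotent. Hence \<open>g = A\<inverse> B\<close> satisfies \<open>F_lie g = A B\<inverse> = g\<inverse>\<close>, i.e. \<open>F g = g\<close>.\<close>

lemma minv_eqI:
  fixes A B :: "'k::field mat"
  assumes A: "A \<in> carrier_mat n n" and B: "B \<in> carrier_mat n n" and AB: "A * B = 1\<^sub>m n"
  shows "minv n A = B"
  unfolding minv_def
proof (rule the_equality)
  have "B * A = 1\<^sub>m n" by (rule mat_mult_left_right_inverse[OF A B AB])
  then show "B \<in> carrier_mat n n \<and> A * B = 1\<^sub>m n \<and> B * A = 1\<^sub>m n" using B AB by blast
next
  fix C assume "C \<in> carrier_mat n n \<and> A * C = 1\<^sub>m n \<and> C * A = 1\<^sub>m n"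
  then have C: "C \<in> carrier_mat n n" and CA: "C * A = 1\<^sub>m n" by auto
  have "C = C * (A * B)" using AB C by simp
  also have "\<dots> = (C * A) * B" using A B C by simp
  also have "\<dots> = B" using CA B by simp
  finally show "C = B" .
qed

lemma right_inverse_imp_GL:
  fixes A B :: "'k::field mat"
  assumes A: "A \<in> carrier_mat n n" and B: "B \<in> carrier_mat n n" and AB: "A * B = 1\<^sub>m n"
  shows "A \<in> GL n"
  using A B AB mat_mult_left_right_inverse[OF A B AB]
  unfolding GL_def invertible_mat_def inverts_mat_def square_mat.simps by auto

fun geom_mat :: "'k::field mat \<Rightarrow> nat \<Rightarrow> 'k mat" where
  "geom_mat z 0 = 0\<^sub>m (dim_row z) (dim_row z)"
| "geom_mat z (Suc k) = 1\<^sub>m (dim_row z) + geom_mat z k * z"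

lemma geom_mat_carrier [simp]: "z \<in> carrier_mat n n \<Longrightarrow> geom_mat z k \<in> carrier_mat n n"
  by (induction k) auto

lemma mult_geom_mat:
  fixes z M :: "'k::field mat"
  assumes z: "z \<in> carrier_mat n n" and M: "M \<in> carrier_mat n n" and Mz: "M + z = 1\<^sub>m n"
  shows "M * geom_mat z k + z ^\<^sub>m k = 1\<^sub>m n"
proof (induction k)
  case 0
  show ?case using z M by simp
next
  case (Suc k)
  have G: "geom_mat z k \<in> carrier_mat n n" using z by simp
  have "M * geom_mat z (Suc k) = M + M * (geom_mat z k * z)"
    using mult_add_distrib_mat[OF M one_carrier_mat mult_carrier_mat[OF G z]] M G z by simp
  then have "M * geom_mat z (Suc k) + z ^\<^sub>m Suc k = M + (M * geom_mat z k + z ^\<^sub>m k) * z"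
    using add_mult_distrib_mat[OF mult_carrier_mat[OF M G] pow_carrier_mat[OF z] z]
      assoc_add_mat[OF M mult_carrier_mat[OF M mult_carrier_mat[OF G z]]
        mult_carrier_mat[OF pow_carrier_mat[OF z] z]] M G z
    by simp
  also have "\<dots> = 1\<^sub>m n" using Suc z Mz by simp
  finally show ?case .
qed

lemma pow_smult_mat:
  fixes x :: "'k::field mat"
  assumes x: "x \<in> carrier_mat n n"
  shows "(c \<cdot>\<^sub>m x) ^\<^sub>m k = c ^ k \<cdot>\<^sub>m x ^\<^sub>m k"
  by (induction k) (use x in \<open>auto simp: mult_smult_assoc_mat[of _ n n] mult_smult_distrib[of _ n n]\<close>)

lemma one_plus_smult_nilp_right_inverse:
  fixes x :: "'k::field mat"
  assumes x: "x \<in> nilp n"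
  obtains B where "B \<in> carrier_mat n n" and "(1\<^sub>m n + c \<cdot>\<^sub>m x) * B = 1\<^sub>m n"
proof -
  obtain m where xc: "x \<in> carrier_mat n n" and xm: "x ^\<^sub>m m = 0\<^sub>m n n"
    using x unfolding nilp_def by auto
  define z where "z = (- c) \<cdot>\<^sub>m x"
  have z: "z \<in> carrier_mat n n" using xc by (simp add: z_def)
  have "z ^\<^sub>m m = 0\<^sub>m n n" by (simp add: z_def pow_smult_mat[OF xc] xm)
  moreover have "(1\<^sub>m n + c \<cdot>\<^sub>m x) + z = 1\<^sub>m n" using xc by (intro eq_matI) (auto simp: z_def)
  ultimately have "(1\<^sub>m n + c \<cdot>\<^sub>m x) * geom_mat z m = 1\<^sub>m n"
    using mult_geom_mat[OF z, of "1\<^sub>m n + c \<cdot>\<^sub>m x" m] xc z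
    by (simp add: right_add_zero_mat[OF mult_carrier_mat[OF _ geom_mat_carrier[OF z]]])
  then show thesis by (rule that[OF geom_mat_carrier[OF z]])
qed

lemma commute_one_plus_smult:
  fixes X x :: "'k::field mat"
  assumes X: "X \<in> carrier_mat n n" and x: "x \<in> carrier_mat n n" and Xx: "X * x = x * X"
  shows "X * (1\<^sub>m n + c \<cdot>\<^sub>m x) = (1\<^sub>m n + c \<cdot>\<^sub>m x) * X"
  using X x Xx
  by (simp add: add_mult_distrib_mat[of _ n n _ _ n] mult_add_distrib_mat[of _ n n _ n]
      mult_smult_assoc_mat[of _ n n _ n] mult_smult_distrib[of _ n n _ n] comm_add_mat[of _ n n])

lemma one_plus_smult_commute:
  fixes x :: "'k::field mat"
  assumes x: "x \<in> carrier_mat n n"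
  shows "(1\<^sub>m n + a \<cdot>\<^sub>m x) * (1\<^sub>m n + b \<cdot>\<^sub>m x) = (1\<^sub>m n + b \<cdot>\<^sub>m x) * (1\<^sub>m n + a \<cdot>\<^sub>m x)"
proof (rule commute_one_plus_smult)
  show "(1\<^sub>m n + a \<cdot>\<^sub>m x) * x = x * (1\<^sub>m n + a \<cdot>\<^sub>m x)"
    using commute_one_plus_smult[OF x x refl, of a] by simp
qed (use x in auto)

lemma F_lie_carrier [simp]: "F_lie q n x \<in> carrier_mat n n"
  unfolding F_lie_def by simp

lemma F_lie_one:
  assumes "q > 0"
  shows "F_lie q n (1\<^sub>m n :: 'k::field mat) = 1\<^sub>m n"
  using assms by (intro eq_matI) (auto simp: F_lie_def)

lemma F_lie_smult:
  fixes x :: "'k::field mat"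
  assumes "x \<in> carrier_mat n n"
  shows "F_lie q n (c \<cdot>\<^sub>m x) = c ^ q \<cdot>\<^sub>m F_lie q n x"
  using assms by (intro eq_matI) (auto simp: F_lie_def power_mult_distrib)

lemma F_lie_add:
  fixes A B :: "'k::field mat"
  assumes "prime CHAR('k)" and "q = CHAR('k) ^ e"
    and "A \<in> carrier_mat n n" and "B \<in> carrier_mat n n"
  shows "F_lie q n (A + B) = F_lie q n A + F_lie q n B"
  using assms by (intro eq_matI) (auto simp: F_lie_def freshmans_dream')

lemma F_lie_mult:
  fixes A B :: "'k::field mat"
  assumes char: "prime CHAR('k)" "q = CHAR('k) ^ e"
    and A: "A \<in> carrier_mat n n" and B: "B \<in> carrier_mat n n"
  shows "F_lie q n (A * B) = F_lie q n B * F_lie q n A"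
proof (rule eq_matI)
  fix i j assume "i < dim_row (F_lie q n B * F_lie q n A)" "j < dim_col (F_lie q n B * F_lie q n A)"
  then have i: "i < n" and j: "j < n" by (auto simp: F_lie_def)
  have "F_lie q n (A * B) $$ (i, j) = (\<Sum>k<n. A $$ (n-1-j, k) * B $$ (k, n-1-i)) ^ q"
    using A B i j by (simp add: F_lie_def scalar_prod_def lessThan_atLeast0)
  also have "\<dots> = (\<Sum>k<n. (A $$ (n-1-j, k)) ^ q * (B $$ (k, n-1-i)) ^ q)"
    using char by (simp add: freshmans_dream_sum' power_mult_distrib)
  also have "\<dots> = (\<Sum>l<n. (B $$ (n-1-l, n-1-i)) ^ q * (A $$ (n-1-j, n-1-l)) ^ q)"
    by (rule sum.reindex_bij_witness[where i="\<lambda>l. n-1-l" and j="\<lambda>k. n-1-k"])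
      (auto simp: mult.commute)
  also have "\<dots> = (F_lie q n B * F_lie q n A) $$ (i, j)"
    using A B i j by (simp add: F_lie_def scalar_prod_def lessThan_atLeast0)
  finally show "F_lie q n (A * B) $$ (i, j) = (F_lie q n B * F_lie q n A) $$ (i, j)" .
qed (auto simp: F_lie_def)

lemma right_inverse_mult_in_GF:
  fixes A B Ai :: "'k::field mat"
  assumes char: "prime CHAR('k)" "q = CHAR('k) ^ e"
    and A: "A \<in> carrier_mat n n" and B: "B \<in> carrier_mat n n" and Ai: "Ai \<in> carrier_mat n n"
    and AAi: "A * Ai = 1\<^sub>m n" and AB: "A * B = B * A"
    and FA: "F_lie q n A = B" and FB: "F_lie q n B = A"
  shows "Ai * B \<in> GF q n"
proof -
  define Bi where "Bi = F_lie q n Ai"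
  have Bi: "Bi \<in> carrier_mat n n" by (simp add: Bi_def)
  have "q > 0" using char prime_gt_0_nat by simp
  have "Bi * B = F_lie q n (A * Ai)" using F_lie_mult[OF char A Ai] FA by (simp add: Bi_def)
  also have "\<dots> = 1\<^sub>m n" using AAi F_lie_one[OF \<open>q > 0\<close>] by simp
  finally have BBi: "B * Bi = 1\<^sub>m n" by (rule mat_mult_left_right_inverse[OF Bi B])
  have AiA: "Ai * A = 1\<^sub>m n" by (rule mat_mult_left_right_inverse[OF A Ai AAi])
  have Fg: "F_lie q n (Ai * B) = A * Bi" using F_lie_mult[OF char Ai B] FB by (simp add: Bi_def)
  have "(Ai * B) * (A * Bi) = Ai * ((B * A) * Bi)"
    using assoc_mult_mat[OF Ai B mult_carrier_mat[OF A Bi]] assoc_mult_mat[OF B A Bi] by simp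
  also have "\<dots> = (Ai * A) * (B * Bi)"
    using assoc_mult_mat[OF Ai A mult_carrier_mat[OF B Bi]] assoc_mult_mat[OF A B Bi] AB by simp
  also have "\<dots> = 1\<^sub>m n" using AiA BBi by simp
  finally have g_Fg: "(Ai * B) * F_lie q n (Ai * B) = 1\<^sub>m n" unfolding Fg .
  have "F_grp q n (Ai * B) = Ai * B"
    unfolding F_grp_def F_lie_def[symmetric] using Ai B
    by (intro minv_eqI mat_mult_left_right_inverse[OF _ _ g_Fg]) auto
  moreover have "Ai * B \<in> GL n" using Ai B by (intro right_inverse_imp_GL[OF _ _ g_Fg]) auto
  ultimately show ?thesis unfolding GF_def by blast
qed

theorem mainTheorem3:
  fixes p e n :: nat and \<alpha> :: "'k::field" and x :: "'k mat"
  assumes "prime p" and "e \<ge> 1" and "q = p ^ e"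
    and "alg_closed_type TYPE('k)" and "CHAR('k) = p"
    and "\<alpha> ^ (q ^ 2) = \<alpha>" and "\<alpha> ^ q \<noteq> \<alpha>"
    and "x \<in> nilp n" and "F_lie q n x = x"
  shows "s_inv q n \<alpha> x \<in> GF q n"
proof -
  have char: "prime CHAR('k)" "q = CHAR('k) ^ e" using assms(1,3,5) by auto
  have x: "x \<in> carrier_mat n n" using assms(8) unfolding nilp_def by auto
  define A where "A = 1\<^sub>m n + \<alpha> ^ q \<cdot>\<^sub>m x"
  define B where "B = 1\<^sub>m n + \<alpha> \<cdot>\<^sub>m x"
  obtain Ai where Ai: "Ai \<in> carrier_mat n n" and AAi: "A * Ai = 1\<^sub>m n"
    using one_plus_smult_nilp_right_inverse[OF assms(8)] unfolding A_def by blast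
  have "q > 0" using char prime_gt_0_nat by simp
  then have F_one_plus: "F_lie q n (1\<^sub>m n + c \<cdot>\<^sub>m x) = 1\<^sub>m n + c ^ q \<cdot>\<^sub>m x" for c
    using x assms(9) by (simp add: F_lie_add[OF char] F_lie_smult F_lie_one)
  have "F_lie q n A = B"
    using assms(6) by (simp add: A_def B_def F_one_plus flip: power_mult power2_eq_square)
  moreover have "F_lie q n B = A" by (simp add: A_def B_def F_one_plus)
  moreover have "s_inv q n \<alpha> x = Ai * B"
    using x minv_eqI[OF _ Ai AAi] by (simp add: s_inv_def A_def B_def comm_add_mat[of _ n n])
  ultimately show ?thesis
    using right_inverse_mult_in_GF[OF char _ _ Ai AAi] one_plus_smult_commute[OF x] x
    by (simp add: A_def B_def)
qed

end
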